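(* Let $W\in\mathbb{R}^{a\times b}$ with columns $w_1,\dots,w_b$, and let $\sigma:\mathbb{R}\to\mathbb{R}$ be positive-homogeneous ($\sigma(\alpha t)=\alpha\sigma(t)$ for all $\alpha\ge0$) and not identically zero. Let $z\sim\mathcal N(0,I_a)$ and define $s_j=\mathbb{E}_z[|\sigma(\langle z,w_j\rangle)|]\big/\big(\frac1b\sum_{k=1}^b\mathbb{E}_z[|\sigma(\langle z,w_k\rangle)|]\big)$. Fix $\tau\in(0,1)$. If $\mathrm{DfI}(W)\le\big(\frac{1-\tau^2}{1+\tau^2}\big)^2$, then $s_j\ge\tau$ for all $j$.
   Context: $\mathrm{DfI}(W)=\|W^\top W-I\|_F^2$ (Deviation from Isometry), with $\|\cdot\|_F$ the Frobenius norm. $s_j$ is the activity score of neuron $j$; a neuron with $s_j<\tau$ is called $\tau$-dormant. *)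

theory Defs
  imports "HOL-Probability.Probability"
begin

definition std_gaussian :: "(real ^ 'n::finite) measure" where
  "std_gaussian = density lborel
     (\<lambda>z. ennreal ((2 * pi) powr (- real CARD('n) / 2) * exp (- (norm z)\<^sup>2 / 2)))"

definition pos_homogeneous :: "(real \<Rightarrow> real) \<Rightarrow> bool" where
  "pos_homogeneous \<sigma> \<longleftrightarrow> (\<forall>\<alpha> t. \<alpha> \<ge> 0 \<longrightarrow> \<sigma> (\<alpha> * t) = \<alpha> * \<sigma> t)"

text \<open>Deviation from isometry: squared Frobenius norm of W^T W - I.  For matrices
  of type real^'n^'m the library norm is the Euclidean norm of all entries,
  i.e. the Frobenius norm.\<close>
definition DfI :: "real ^ 'b::finite ^ 'a::finite \<Rightarrow> real" where
  "DfI W = (norm (transpose W ** W - mat 1))\<^sup>2"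

definition mean_abs_act :: "(real \<Rightarrow> real) \<Rightarrow> real ^ 'a::finite \<Rightarrow> real" where
  "mean_abs_act \<sigma> w = (\<integral>z. \<bar>\<sigma> (z \<bullet> w)\<bar> \<partial>std_gaussian)"

definition activity_score ::
  "(real \<Rightarrow> real) \<Rightarrow> real ^ 'b::finite ^ 'a::finite \<Rightarrow> 'b \<Rightarrow> real" where
  "activity_score \<sigma> W j =
     mean_abs_act \<sigma> (column j W) /
       ((1 / real CARD('b)) * (\<Sum>k\<in>UNIV. mean_abs_act \<sigma> (column k W)))"

end

theory Submission
  imports Defs
begin

text \<open>
  Writing z as the image of a vector of independent standard normal coordinates shows that
  \<open>\<langle>z, w\<rangle>\<close> is distributed as \<open>N(0, \<parallel>w\<parallel>\<^sup>2)\<close>.  A positively homogeneous \<open>\<sigma>\<close> satisfies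
  \<open>\<bar>\<sigma> x\<bar> = \<bar>\<sigma> 1\<bar> x\<^sup>+ + \<bar>\<sigma> (-1)\<bar> x\<^sup>-\<close>, hence
  \<open>E \<bar>\<sigma> \<langle>z, w\<rangle>\<bar> = \<parallel>w\<parallel> (\<bar>\<sigma> 1\<bar> + \<bar>\<sigma> (-1)\<bar>) / \<surd>(2\<pi>)\<close>, and the activity score of neuron j
  is just \<open>\<parallel>w\<^sub>j\<parallel>\<close> divided by the mean column norm.  The diagonal entries of
  \<open>W\<^sup>T W - I\<close> are \<open>\<parallel>w\<^sub>k\<parallel>\<^sup>2 - 1\<close> and are bounded by its Frobenius norm
  \<open>\<delta> = (1 - \<tau>\<^sup>2) / (1 + \<tau>\<^sup>2)\<close>; since \<open>\<tau>\<^sup>2 (1 + \<delta>) = 1 - \<delta>\<close>, every column satisfies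
  \<open>\<tau> \<parallel>w\<^sub>k\<parallel> \<le> \<parallel>w\<^sub>j\<parallel>\<close>, and averaging over k gives \<open>s\<^sub>j \<ge> \<tau>\<close>.
\<close>

abbreviation std_normal :: "real measure" where
  "std_normal \<equiv> density lborel (\<lambda>x. ennreal (std_normal_density x))"

lemma prob_space_std_normal: "prob_space std_normal"
  using prob_space_normal_density[of 1 0] by simp

lemma PiM_std_normal_eq_density:
  assumes I: "finite I"
  shows "PiM I (\<lambda>_. std_normal)
    = density (PiM I (\<lambda>_. lborel)) (\<lambda>f. \<Prod>i\<in>I. ennreal (std_normal_density (f i)))"
proof -
  interpret N: prob_space std_normal by (rule prob_space_std_normal)
  interpret P: product_sigma_finite "\<lambda>_. std_normal" by standard
  interpret L: product_sigma_finite "\<lambda>_. lborel :: real measure" by standard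
  show ?thesis
  proof (rule P.PiM_eqI[OF I, symmetric])
    show "sets (density (PiM I (\<lambda>_. lborel)) (\<lambda>f. \<Prod>i\<in>I. ennreal (std_normal_density (f i))))
      = sets (PiM I (\<lambda>_. std_normal))"
      unfolding sets_density by (rule sets_PiM_cong) auto
  next
    fix A assume A: "\<And>i. i \<in> I \<Longrightarrow> A i \<in> sets std_normal"
    have "emeasure (density (PiM I (\<lambda>_. lborel)) (\<lambda>f. \<Prod>i\<in>I. ennreal (std_normal_density (f i)))) (Pi\<^sub>E I A)
       = (\<integral>\<^sup>+ f. (\<Prod>i\<in>I. ennreal (std_normal_density (f i)) * indicator (A i) (f i)) \<partial>PiM I (\<lambda>_. lborel))"
      using A I by (subst emeasure_density)
        (auto intro!: sets_PiM_I_finite nn_integral_cong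
          simp: space_PiM indicator_def prod.distrib PiE_iff)
    also have "\<dots> = (\<Prod>i\<in>I. \<integral>\<^sup>+ x. ennreal (std_normal_density x) * indicator (A i) x \<partial>lborel)"
      using A by (intro L.product_nn_integral_prod I) auto
    also have "\<dots> = (\<Prod>i\<in>I. emeasure std_normal (A i))"
      using A by (intro prod.cong refl) (auto simp: emeasure_density)
    finally show "emeasure (density (PiM I (\<lambda>_. lborel)) (\<lambda>f. \<Prod>i\<in>I. ennreal (std_normal_density (f i)))) (Pi\<^sub>E I A)
      = (\<Prod>i\<in>I. emeasure std_normal (A i))" .
  qed
qed

lemma gaussian_density_eq_prod_std_normal_density:
  fixes z :: "'v::euclidean_space"
  shows "(2 * pi) powr (- real DIM('v) / 2) * exp (- (norm z)\<^sup>2 / 2)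
    = (\<Prod>b\<in>Basis. std_normal_density (z \<bullet> b))"
proof -
  have "(\<Prod>b\<in>(Basis::'v set). 1 / sqrt (2 * pi)) = (2 * pi) powr (- real DIM('v) / 2)"
    by (simp add: sqrt_def root_powr_inverse powr_minus_divide powr_divide
        powr_realpow[symmetric] powr_powr)
  moreover have "(norm z)\<^sup>2 = (\<Sum>b\<in>Basis. (z \<bullet> b)\<^sup>2)"
    unfolding power2_norm_eq_inner by (subst euclidean_inner) (simp add: power2_eq_square)
  then have "(\<Prod>b\<in>(Basis::'v set). exp (- (z \<bullet> b)\<^sup>2 / 2)) = exp (- (norm z)\<^sup>2 / 2)"
    by (simp add: exp_sum[symmetric] sum_negf sum_divide_distrib)
  ultimately show ?thesis
    unfolding std_normal_density_def prod.distrib by (simp only:)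
qed

lemma std_gaussian_eq_distr_PiM:
  "(std_gaussian :: (real ^ 'n::finite) measure)
    = distr (PiM Basis (\<lambda>_. std_normal)) borel (\<lambda>f. \<Sum>b\<in>Basis. f b *\<^sub>R b)"
proof -
  let ?T = "\<lambda>f. \<Sum>b\<in>Basis. f b *\<^sub>R (b :: real ^ 'n)"
  let ?g = "\<lambda>z::real ^ 'n. ennreal ((2 * pi) powr (- real DIM(real ^ 'n) / 2) * exp (- (norm z)\<^sup>2 / 2))"
  have [measurable]: "?T \<in> measurable (PiM Basis (\<lambda>_. lborel)) borel"
    by measurable
  have "std_gaussian = density (distr (PiM Basis (\<lambda>_. lborel)) borel ?T) ?g"
    unfolding std_gaussian_def by (subst lborel_eq) simp
  also have "\<dots> = distr (density (PiM Basis (\<lambda>_. lborel)) (\<lambda>f. ?g (?T f))) borel ?T"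
    by (rule density_distr) auto
  also have "density (PiM Basis (\<lambda>_. lborel)) (\<lambda>f. ?g (?T f))
    = density (PiM Basis (\<lambda>_. lborel)) (\<lambda>f. \<Prod>b\<in>Basis. ennreal (std_normal_density (f b)))"
  proof (intro density_cong AE_I2)
    fix f :: "real ^ 'n \<Rightarrow> real"
    have "?T f \<bullet> b = f b" if "b \<in> Basis" for b
      using that by (simp add: inner_sum_left inner_Basis if_distrib cong: if_cong)
    then show "?g (?T f) = (\<Prod>b\<in>Basis. ennreal (std_normal_density (f b)))"
      unfolding gaussian_density_eq_prod_std_normal_density by (simp add: prod_ennreal cong: prod.cong)
  qed auto
  finally show ?thesis
    by (simp add: PiM_std_normal_eq_density)
qed

lemma indep_vars_PiM_components:
  assumes M: "prob_space M" and I: "I \<noteq> {}"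
  shows "prob_space.indep_vars (PiM I (\<lambda>_. M)) (\<lambda>_. M) (\<lambda>i f. f i) I"
proof -
  interpret P: prob_space "PiM I (\<lambda>_. M)" by (intro prob_space_PiM M)
  have "distr (PiM I (\<lambda>_. M)) (PiM I (\<lambda>_. M)) (\<lambda>f. \<lambda>i\<in>I. f i) = PiM I (\<lambda>_. M)"
    by (subst distr_cong[where g = "\<lambda>f. f"]) (auto simp: space_PiM)
  also have "\<dots> = PiM I (\<lambda>i. distr (PiM I (\<lambda>_. M)) M (\<lambda>f. f i))"
    by (intro PiM_cong refl) (simp add: distr_PiM_component[where M = "\<lambda>_. M", OF M])
  finally show ?thesis
    by (subst P.indep_vars_iff_distr_eq_PiM'[OF I]) auto
qed

lemma distributed_PiM_std_normal_lincomb: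
  assumes I: "finite I" and c: "\<exists>i\<in>I. c i \<noteq> 0"
  shows "distributed (PiM I (\<lambda>_. std_normal)) lborel (\<lambda>f. \<Sum>i\<in>I. c i * f i)
    (normal_density 0 (sqrt (\<Sum>i\<in>I. (c i)\<^sup>2)))"
proof -
  interpret P: prob_space "PiM I (\<lambda>_. std_normal)"
    by (intro prob_space_PiM prob_space_std_normal)
  \<comment> \<open>\<open>sum_indep_normal\<close> needs positive standard deviations, so null coefficients are dropped.\<close>
  define J where "J = {i\<in>I. c i \<noteq> 0}"
  have J: "finite J" "J \<noteq> {}" "J \<subseteq> I"
    using I c by (auto simp: J_def)
  have "P.indep_vars (\<lambda>_. std_normal) (\<lambda>i f. f i) J"
    by (rule P.indep_vars_subset[OF indep_vars_PiM_components[OF prob_space_std_normal]])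
      (use J in auto)
  then have indep: "P.indep_vars (\<lambda>_. borel) (\<lambda>i f. c i * f i) J"
    by (rule P.indep_vars_compose2) measurable
  have "distributed (PiM I (\<lambda>_. std_normal)) lborel (\<lambda>f. f i) std_normal_density"
    if "i \<in> I" for i
  proof -
    have "distr (PiM I (\<lambda>_. std_normal)) lborel (\<lambda>f. f i)
      = distr (PiM I (\<lambda>_. std_normal)) std_normal (\<lambda>f. f i)"
      by (rule distr_cong) auto
    also have "\<dots> = std_normal"
      using that by (intro distr_PiM_component prob_space_std_normal)
    finally show ?thesis
      unfolding distributed_def using that by (auto simp: measurable_component_singleton)
  qed
  then have "distributed (PiM I (\<lambda>_. std_normal)) lborel (\<lambda>f. c i * f i) (normal_density 0 \<bar>c i\<bar>)"
    if "i \<in> J" for i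
    using P.normal_density_affine[of "\<lambda>f. f i" 0 1 "c i" 0] that by (auto simp: J_def)
  then have "distributed (PiM I (\<lambda>_. std_normal)) lborel (\<lambda>f. \<Sum>i\<in>J. c i * f i)
    (normal_density (\<Sum>i\<in>J. 0) (sqrt (\<Sum>i\<in>J. \<bar>c i\<bar>\<^sup>2)))"
    using J indep by (intro P.sum_indep_normal) (auto simp: J_def)
  moreover have "(\<Sum>i\<in>J. g i * c i) = (\<Sum>i\<in>I. g i * c i)" for g :: "'a \<Rightarrow> real"
    using J by (intro sum.mono_neutral_left I) (auto simp: J_def)
  ultimately show ?thesis
    by (simp add: mult.commute power2_eq_square)
qed

lemma distributed_std_gaussian_inner:
  fixes w :: "real ^ 'n::finite"
  assumes "w \<noteq> 0"
  shows "distributed std_gaussian lborel (\<lambda>z. z \<bullet> w) (normal_density 0 (norm w))"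
proof -
  let ?P = "PiM (Basis :: (real ^ 'n) set) (\<lambda>_. std_normal)"
  let ?T = "\<lambda>f. \<Sum>b\<in>Basis. f b *\<^sub>R (b :: real ^ 'n)"
  have T[measurable]: "?T \<in> measurable ?P borel"
    by (simp add: measurable_cong_sets[OF sets_PiM_cong[OF refl sets_density] refl])
  have "\<exists>b\<in>Basis. b \<bullet> w \<noteq> 0"
    using assms euclidean_all_zero_iff[of w] by (auto simp: inner_commute)
  then have "distributed ?P lborel (\<lambda>f. \<Sum>b\<in>Basis. (b \<bullet> w) * f b)
    (normal_density 0 (sqrt (\<Sum>b\<in>Basis. (b \<bullet> w)\<^sup>2)))"
    by (intro distributed_PiM_std_normal_lincomb) auto
  moreover have "(\<Sum>b\<in>Basis. (b \<bullet> w)\<^sup>2) = (norm w)\<^sup>2"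
    unfolding power2_norm_eq_inner by (subst euclidean_inner) (simp add: power2_eq_square inner_commute)
  moreover have "(\<lambda>f. \<Sum>b\<in>Basis. (b \<bullet> w) * f b) = (\<lambda>f. ?T f \<bullet> w)"
    by (simp add: inner_sum_left mult.commute)
  ultimately have "distributed ?P lborel (\<lambda>f. ?T f \<bullet> w) (normal_density 0 (norm w))"
    by simp
  then show ?thesis
    unfolding std_gaussian_eq_distr_PiM distributed_def by (simp add: distr_distr comp_def)
qed

lemma pos_homogeneous_eq:
  assumes "pos_homogeneous \<sigma>"
  shows "\<sigma> x = (if 0 \<le> x then x * \<sigma> 1 else - x * \<sigma> (-1))"
  using assms[unfolded pos_homogeneous_def, rule_format, of x 1]
    assms[unfolded pos_homogeneous_def, rule_format, of "-x" "-1"]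
  by auto

lemma pos_homogeneous_abs_eq:
  assumes "pos_homogeneous \<sigma>"
  shows "\<bar>\<sigma> x\<bar> = \<bar>\<sigma> 1\<bar> * max x 0 + \<bar>\<sigma> (-1)\<bar> * max (- x) 0"
  by (subst pos_homogeneous_eq[OF assms]) (auto simp: abs_mult)

lemma borel_measurable_pos_homogeneous:
  assumes "pos_homogeneous \<sigma>"
  shows "\<sigma> \<in> borel_measurable borel"
proof -
  have "\<sigma> = (\<lambda>x. if 0 \<le> x then x * \<sigma> 1 else - x * \<sigma> (-1))"
    using pos_homogeneous_eq[OF assms] by blast
  also have "\<dots> \<in> borel_measurable borel"
    by measurable
  finally show ?thesis .
qed

lemma integrable_std_normal_max:
  "integrable lborel (\<lambda>x. std_normal_density x * max (c * x) 0)"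
proof (rule Bochner_Integration.integrable_bound)
  show "integrable lborel (\<lambda>x. \<bar>c\<bar> * (std_normal_density x * \<bar>x\<bar> ^ 1))"
    by (intro integrable_mult_right integrable_std_normal_moment_abs)
  show "AE x in lborel. norm (std_normal_density x * max (c * x) 0)
      \<le> norm (\<bar>c\<bar> * (std_normal_density x * \<bar>x\<bar> ^ 1))"
  proof (intro AE_I2)
    fix x :: real
    have "max (c * x) 0 \<le> \<bar>c\<bar> * \<bar>x\<bar>"
      by (metis abs_ge_self abs_ge_zero abs_mult max.bounded_iff)
    from mult_left_mono[OF this normal_density_nonneg]
    show "norm (std_normal_density x * max (c * x) 0)
      \<le> norm (\<bar>c\<bar> * (std_normal_density x * \<bar>x\<bar> ^ 1))"
      by (simp add: abs_mult normal_density_nonneg mult_ac)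
  qed
qed measurable

lemma integral_std_normal_pos_neg_part:
  shows "(\<integral>x. std_normal_density x * max x 0 \<partial>lborel) = 1 / sqrt (2 * pi)"
    and "(\<integral>x. std_normal_density x * max (- x) 0 \<partial>lborel) = 1 / sqrt (2 * pi)"
proof -
  let ?A = "\<integral>x. std_normal_density x * max x 0 \<partial>lborel"
  have reflect: "(\<integral>x. std_normal_density x * max (- x) 0 \<partial>lborel) = ?A"
    using lborel_integral_real_affine[of "-1" "\<lambda>x. std_normal_density x * max x 0" 0]
    by (simp add: std_normal_density_def)
  have "sqrt (2 / pi) = (\<integral>x. std_normal_density x * \<bar>x\<bar> \<partial>lborel)"
    using integral_std_normal_moment_abs_odd[of 0] by simp
  also have "\<dots> = (\<integral>x. std_normal_density x * max x 0 + std_normal_density x * max (- x) 0 \<partial>lborel)"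
    by (intro Bochner_Integration.integral_cong) (auto simp: abs_if)
  also have "\<dots> = 2 * ?A"
    using integrable_std_normal_max[of 1] integrable_std_normal_max[of "-1"] reflect by simp
  finally have "?A = sqrt (2 / pi) / 2"
    by simp
  also have "\<dots> = 1 / sqrt (2 * pi)"
    by (simp add: real_sqrt_divide real_sqrt_mult field_simps)
  finally show "?A = 1 / sqrt (2 * pi)" .
  with reflect show "(\<integral>x. std_normal_density x * max (- x) 0 \<partial>lborel) = 1 / sqrt (2 * pi)"
    by simp
qed

lemma integral_std_normal_abs_pos_homogeneous:
  assumes "pos_homogeneous \<sigma>"
  shows "(\<integral>x. std_normal_density x * \<bar>\<sigma> x\<bar> \<partial>lborel) = (\<bar>\<sigma> 1\<bar> + \<bar>\<sigma> (-1)\<bar>) / sqrt (2 * pi)"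
proof -
  have "(\<integral>x. std_normal_density x * \<bar>\<sigma> x\<bar> \<partial>lborel)
    = (\<integral>x. \<bar>\<sigma> 1\<bar> * (std_normal_density x * max x 0)
         + \<bar>\<sigma> (-1)\<bar> * (std_normal_density x * max (- x) 0) \<partial>lborel)"
    by (subst pos_homogeneous_abs_eq[OF assms]) (simp add: algebra_simps)
  also have "\<dots> = \<bar>\<sigma> 1\<bar> * (\<integral>x. std_normal_density x * max x 0 \<partial>lborel)
      + \<bar>\<sigma> (-1)\<bar> * (\<integral>x. std_normal_density x * max (- x) 0 \<partial>lborel)"
    using integrable_std_normal_max[of 1] integrable_std_normal_max[of "-1"] by simp
  finally show ?thesis
    by (simp add: integral_std_normal_pos_neg_part add_divide_distrib)
qed

lemma mean_abs_act_pos_homogeneous: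
  fixes w :: "real ^ 'n::finite"
  assumes \<sigma>: "pos_homogeneous \<sigma>"
  shows "mean_abs_act \<sigma> w = norm w * (\<bar>\<sigma> 1\<bar> + \<bar>\<sigma> (-1)\<bar>) / sqrt (2 * pi)"
proof (cases "w = 0")
  case True
  then show ?thesis
    using \<sigma>[unfolded pos_homogeneous_def, rule_format, of 0 0] by (simp add: mean_abs_act_def)
next
  case False
  define u where "u = w /\<^sub>R norm w"
  have "norm u = 1"
    using False by (simp add: u_def)
  then have u: "distributed std_gaussian lborel (\<lambda>z. z \<bullet> u) std_normal_density"
    using distributed_std_gaussian_inner[of u] by fastforce
  have "\<bar>\<sigma> (z \<bullet> w)\<bar> = norm w * \<bar>\<sigma> (z \<bullet> u)\<bar>" for z
  proof -
    have "z \<bullet> w = norm w * (z \<bullet> u)"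
      using False by (simp add: u_def)
    then show ?thesis
      using \<sigma>[unfolded pos_homogeneous_def, rule_format, of "norm w" "z \<bullet> u"] by (simp add: abs_mult)
  qed
  then have "mean_abs_act \<sigma> w = norm w * (\<integral>z. \<bar>\<sigma> (z \<bullet> u)\<bar> \<partial>std_gaussian)"
    by (simp add: mean_abs_act_def)
  also have "(\<integral>z. \<bar>\<sigma> (z \<bullet> u)\<bar> \<partial>std_gaussian) = (\<integral>x. std_normal_density x * \<bar>\<sigma> x\<bar> \<partial>lborel)"
    using borel_measurable_pos_homogeneous[OF \<sigma>]
    by (intro distributed_integral[OF u, symmetric]) auto
  finally show ?thesis
    by (simp add: integral_std_normal_abs_pos_homogeneous[OF \<sigma>])
qed

lemma activity_score_eq_column_norms:
  fixes W :: "real ^ 'b::finite ^ 'a::finite"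
  assumes \<sigma>: "pos_homogeneous \<sigma>" and nonzero: "\<exists>t. \<sigma> t \<noteq> 0"
  shows "activity_score \<sigma> W j
    = real CARD('b) * norm (column j W) / (\<Sum>k\<in>UNIV. norm (column k W))"
proof -
  define K where "K = (\<bar>\<sigma> 1\<bar> + \<bar>\<sigma> (-1)\<bar>) / sqrt (2 * pi)"
  have "\<sigma> 1 \<noteq> 0 \<or> \<sigma> (-1) \<noteq> 0"
    using nonzero pos_homogeneous_eq[OF \<sigma>] by (metis mult_eq_0_iff)
  then have "K \<noteq> 0"
    by (auto simp: K_def add_nonneg_eq_0_iff)
  moreover have "mean_abs_act \<sigma> (column k W) = norm (column k W) * K" for k
    by (simp add: mean_abs_act_pos_homogeneous[OF \<sigma>] K_def)
  ultimately show ?thesis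
    by (simp add: activity_score_def sum_distrib_right[symmetric])
qed

lemma abs_matrix_entry_le_norm:
  fixes M :: "real ^ 'n::finite ^ 'm::finite"
  shows "\<bar>M $ i $ j\<bar> \<le> norm M"
  using component_le_norm_cart[of "M $ i" j] Finite_Cartesian_Product.norm_nth_le[of M i] by linarith

lemma transpose_mult_self_minus_id_diag:
  fixes W :: "real ^ 'b::finite ^ 'a::finite"
  shows "(transpose W ** W - mat 1) $ j $ j = (norm (column j W))\<^sup>2 - 1"
  by (simp add: matrix_matrix_mult_def transpose_def column_def mat_def
      power2_norm_eq_inner inner_vec_def)

lemma abs_column_norm_sq_minus_1_le_DfI:
  fixes W :: "real ^ 'b::finite ^ 'a::finite"
  assumes "DfI W \<le> \<delta>\<^sup>2" and "0 \<le> \<delta>"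
  shows "\<bar>(norm (column j W))\<^sup>2 - 1\<bar> \<le> \<delta>"
proof -
  have "norm (transpose W ** W - mat 1) \<le> \<delta>"
    using assms by (simp add: DfI_def power2_le_iff_abs_le)
  then show ?thesis
    using abs_matrix_entry_le_norm[of "transpose W ** W - mat 1" j j]
    unfolding transpose_mult_self_minus_id_diag by linarith
qed

lemma mult_le_of_squares_near_1:
  fixes a b \<tau> :: real
  defines "\<delta> \<equiv> (1 - \<tau>\<^sup>2) / (1 + \<tau>\<^sup>2)"
  assumes "\<bar>a\<^sup>2 - 1\<bar> \<le> \<delta>" and "\<bar>b\<^sup>2 - 1\<bar> \<le> \<delta>" and "0 \<le> b"
  shows "\<tau> * a \<le> b"
proof (rule power2_le_imp_le)
  have "1 + \<tau>\<^sup>2 > 0"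
    by (simp add: add_pos_nonneg)
  then have "\<tau>\<^sup>2 * (1 + \<delta>) = 1 - \<delta>"
    by (simp add: \<delta>_def field_simps)
  moreover have "\<tau>\<^sup>2 * a\<^sup>2 \<le> \<tau>\<^sup>2 * (1 + \<delta>)"
    using assms(2) by (intro mult_left_mono) auto
  ultimately show "(\<tau> * a)\<^sup>2 \<le> b\<^sup>2"
    using assms(3) by (simp add: power_mult_distrib)
qed fact

theorem corollary2:
  fixes W :: "real ^ 'b::finite ^ 'a::finite"
    and \<sigma> :: "real \<Rightarrow> real"
    and \<tau> :: real
  assumes "pos_homogeneous \<sigma>"
    and "\<exists>t. \<sigma> t \<noteq> 0"
    and "0 < \<tau>" and "\<tau> < 1"
    and "DfI W \<le> ((1 - \<tau>\<^sup>2) / (1 + \<tau>\<^sup>2))\<^sup>2"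
  shows "\<forall>j. activity_score \<sigma> W j \<ge> \<tau>"
proof
  fix j :: 'b
  define \<delta> where "\<delta> = (1 - \<tau>\<^sup>2) / (1 + \<tau>\<^sup>2)"
  define c where "c k = norm (column k W)" for k
  have "\<tau>\<^sup>2 < 1"
    using assms(3,4) by (simp add: power_less_one_iff)
  then have "0 \<le> \<delta>" "\<delta> < 1"
    using assms(3) by (auto simp: \<delta>_def divide_less_eq add_pos_nonneg)
  then have near_1: "\<bar>(c k)\<^sup>2 - 1\<bar> \<le> \<delta>" for k
    using abs_column_norm_sq_minus_1_le_DfI assms(5) by (simp add: c_def \<delta>_def)
  have c_pos: "0 < c k" for k
    using near_1[of k] \<open>\<delta> < 1\<close> by (auto simp: c_def)
  have "\<tau> * (\<Sum>k\<in>UNIV. c k) \<le> (\<Sum>k\<in>(UNIV :: 'b set). c j)"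
    unfolding sum_distrib_left
    using near_1 less_imp_le[OF c_pos] by (intro sum_mono mult_le_of_squares_near_1) (auto simp: \<delta>_def)
  moreover have "0 < (\<Sum>k\<in>UNIV. c k)"
    by (intro sum_pos c_pos) auto
  ultimately show "\<tau> \<le> activity_score \<sigma> W j"
    by (simp add: activity_score_eq_column_norms[OF assms(1,2)] c_def pos_le_divide_eq mult.commute)
qed

end
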